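(* Let $m\ge1$ be an integer with $m\equiv r\pmod{12}$, $0\le r\le 11$. If $r\notin\{2,4,6,8,10\}$, then the friendship graph $F_j$ is $\mathbb{Z}_m$-cordial for every $j\in\mathbb{N}$ with $j\le\lfloor m/2\rfloor$. If $m\equiv 2\pmod{12}$, then $F_j$ is $\mathbb{Z}_m$-cordial for every $j\in\mathbb{N}$ with $j\le\lfloor m/2\rfloor-1$.
   Context: Graphs are finite, simple and undirected. For $n\in\mathbb{N}$, the friendship graph $F_n$ is the union of $n$ copies of the triangle $C_3$ joined at a single common (central) vertex. For an abelian group $A$ and a graph $G=(V,E)$, a vertex labeling $\ell:V\to A$ induces an edge labeling $\ell(\{v_1,v_2\})=\ell(v_1)+\ell(v_2)$. Let $f_V(a)=|\{v\in V:\ell(v)=a\}|$ and $f_E(a)=|\{e\in E:\ell(e)=a\}|$. The labeling is $A$-cordial if $|f_V(a_1)-f_V(a_2)|\le 1$ and $|f_E(a_1)-f_E(a_2)|\le 1$ for all $a_1,a_2\in A$; $G$ is $A$-cordial if it admits an $A$-cordial labeling. *)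

theory Defs
  imports Main
begin

definition friendship_vertices :: "nat \<Rightarrow> nat set" where
  "friendship_vertices n = {0..2*n}"

definition friendship_edges :: "nat \<Rightarrow> nat set set" where
  "friendship_edges n =
     (\<Union>i\<in>{1..n}. {{0, 2*i - 1}, {0, 2*i}, {2*i - 1, 2*i}})"

definition vcount :: "'v set \<Rightarrow> ('v \<Rightarrow> nat) \<Rightarrow> nat \<Rightarrow> nat" where
  "vcount V l a = card {v \<in> V. l v = a}"

definition ecount :: "nat \<Rightarrow> 'v set set \<Rightarrow> ('v \<Rightarrow> nat) \<Rightarrow> nat \<Rightarrow> nat" where
  "ecount m E l a = card {e \<in> E. \<exists>u v. e = {u, v} \<and> u \<noteq> v \<and> (l u + l v) mod m = a}"

definition Zm_cordial_labeling :: "nat \<Rightarrow> 'v set \<Rightarrow> 'v set set \<Rightarrow> ('v \<Rightarrow> nat) \<Rightarrow> bool" where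
  "Zm_cordial_labeling m V E l \<longleftrightarrow>
     (\<forall>v\<in>V. l v < m) \<and>
     (\<forall>a1<m. \<forall>a2<m.
        \<bar>int (vcount V l a1) - int (vcount V l a2)\<bar> \<le> 1 \<and>
        \<bar>int (ecount m E l a1) - int (ecount m E l a2)\<bar> \<le> 1)"

definition Zm_cordial :: "nat \<Rightarrow> 'v set \<Rightarrow> 'v set set \<Rightarrow> bool" where
  "Zm_cordial m V E \<longleftrightarrow> (\<exists>l. Zm_cordial_labeling m V E l)"

end

theory Submission
  imports Defs
begin

text \<open>Label the centre of \<open>F\<^sub>n\<close> by 0 and the outer vertices of triangle \<open>a\<close> by \<open>x\<^sub>a\<close>
  and \<open>y\<^sub>a\<close>. The spokes then carry \<open>x\<^sub>a\<close> and \<open>y\<^sub>a\<close> again and the rim edge carries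
  \<open>x\<^sub>a + y\<^sub>a\<close>, so the labelling is \<open>\<int>\<^sub>m\<close>-cordial iff the multisets \<open>{0} \<union> {x\<^sub>a, y\<^sub>a}\<close> and
  \<open>{x\<^sub>a, y\<^sub>a, x\<^sub>a + y\<^sub>a}\<close> are balanced modulo \<open>m\<close>; with all representatives taken from one
  window of \<open>m\<close> consecutive integers this is a statement about integer counts.

  The basic block takes \<open>x\<^sub>a = p + a\<close> and \<open>y\<^sub>a = -p - \<sigma>(a)\<close> for a zigzag permutation
  \<open>\<sigma>\<close> of \<open>{0..<n}\<close> (even numbers first, then odd ones, or vice versa), for which the
  differences \<open>a - \<sigma>(a)\<close> are distinct and fill a symmetric interval around 0. So the
  outer labels fill \<open>\<plusminus>[p, p + n)\<close> and the rim labels fill \<open>[-n/2, n/2]\<close>. For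
  \<open>3j < m\<close> the offset \<open>p\<close> keeps these intervals disjoint; for larger \<open>j\<close> it makes them
  tile the window, one extra triangle repairing the even moduli. The boundary cases
  \<open>3j = m\<close> and \<open>3j = m + 1\<close> are explicit families.\<close>

section \<open>Label counts on friendship graphs\<close>

lemma friendship_vertices_eq:
  "friendship_vertices n = insert 0 ((\<lambda>a. 2*a + 1) ` {..<n} \<union> (\<lambda>a. 2*a + 2) ` {..<n})"
proof (rule set_eqI)
  fix v :: nat
  have "v \<noteq> 0 \<Longrightarrow> (\<exists>a. v = 2*a + 1) \<or> (\<exists>a. v = 2*a + 2)"
    by presburger
  then show "v \<in> friendship_vertices n \<longleftrightarrow> v \<in> insert 0 ((\<lambda>a. 2*a + 1) ` {..<n} \<union> (\<lambda>a. 2*a + 2) ` {..<n})"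
    unfolding friendship_vertices_def by auto
qed

lemma friendship_edges_eq:
  "friendship_edges n =
     (\<lambda>a. {0, 2*a + 1}) ` {..<n} \<union> (\<lambda>a. {0, 2*a + 2}) ` {..<n} \<union> (\<lambda>a. {2*a + 1, 2*a + 2}) ` {..<n}"
  unfolding friendship_edges_def image_Suc_lessThan[symmetric] by auto

lemma card_filter_image:
  assumes "inj_on f A"
  shows "card {x \<in> f ` A. P x} = card {a \<in> A. P (f a)}"
proof -
  have "{x \<in> f ` A. P x} = f ` {a \<in> A. P (f a)}"
    by auto
  moreover have "inj_on f {a \<in> A. P (f a)}"
    using assms by (rule inj_on_subset) auto
  ultimately show ?thesis
    by (simp add: card_image)
qed

lemma vcount_friendship:
  "vcount (friendship_vertices n) l b =
     of_bool (l 0 = b) + card {a. a < n \<and> l (2*a + 1) = b} + card {a. a < n \<and> l (2*a + 2) = b}"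
proof -
  let ?V1 = "(\<lambda>a. 2*a + 1) ` {..<n}" and ?V2 = "(\<lambda>a. 2*a + 2) ` {..<n}"
  have "2*a + 1 \<noteq> 2*a' + (2::nat)" for a a'
    by presburger
  then have disj: "{v \<in> ?V1. l v = b} \<inter> {v \<in> ?V2. l v = b} = {}"
      "{v \<in> {0}. l v = b} \<inter> ({v \<in> ?V1. l v = b} \<union> {v \<in> ?V2. l v = b}) = {}"
    by auto
  have inj: "inj_on (\<lambda>a. 2*a + 1) {..<n}" "inj_on (\<lambda>a. 2*a + 2) {..<n}"
    by (auto simp: inj_on_def)
  have "{v \<in> friendship_vertices n. l v = b} =
      {v \<in> {0}. l v = b} \<union> ({v \<in> ?V1. l v = b} \<union> {v \<in> ?V2. l v = b})"
    unfolding friendship_vertices_eq by blast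
  moreover have "{v \<in> {0}. l v = b} = (if l 0 = b then {0} else {})"
    by auto
  ultimately have "card {v \<in> friendship_vertices n. l v = b} = of_bool (l 0 = b) + (card {v \<in> ?V1. l v = b} + card {v \<in> ?V2. l v = b})"
    using disj by (simp add: card_Un_disjoint)
  then show ?thesis
    unfolding vcount_def card_filter_image[OF inj(1)] card_filter_image[OF inj(2)]
    by (simp add: lessThan_def)
qed

lemma ecount_friendship:
  "ecount m (friendship_edges n) l b =
     card {a. a < n \<and> (l 0 + l (2*a + 1)) mod m = b} + card {a. a < n \<and> (l 0 + l (2*a + 2)) mod m = b}
     + card {a. a < n \<and> (l (2*a + 1) + l (2*a + 2)) mod m = b}"
proof -
  let ?E1 = "(\<lambda>a. {0, 2*a + 1}) ` {..<n}" and ?E2 = "(\<lambda>a. {0, 2*a + 2}) ` {..<n}"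
    and ?E3 = "(\<lambda>a. {2*a + 1, 2*a + 2}) ` {..<n}"
  let ?P = "\<lambda>e. \<exists>u v. e = {u, v} \<and> u \<noteq> v \<and> (l u + l v) mod m = b"
  have label: "?P {p, q} \<longleftrightarrow> (l p + l q) mod m = b" if "p \<noteq> q" for p q
    using that by (auto simp: doubleton_eq_iff add.commute)
  have "{0, 2*a + 1} \<noteq> {0, 2*a' + 2}" for a a' :: nat
    by (auto simp: doubleton_eq_iff) presburger
  then have "?E1 \<inter> ?E2 = {}" "(?E1 \<union> ?E2) \<inter> ?E3 = {}"
    by auto
  then have disj: "{e \<in> ?E1. Q e} \<inter> {e \<in> ?E2. Q e} = {}"
      "({e \<in> ?E1. Q e} \<union> {e \<in> ?E2. Q e}) \<inter> {e \<in> ?E3. Q e} = {}" for Q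
    by blast+
  have inj: "inj_on (\<lambda>a. {0, 2*a + 1}) {..<n}" "inj_on (\<lambda>a. {0, 2*a + 2}) {..<n}"
      "inj_on (\<lambda>a. {2*a + 1, 2*a + 2}) {..<n}"
    by (auto simp: inj_on_def doubleton_eq_iff)
  have "{e \<in> friendship_edges n. Q e} = ({e \<in> ?E1. Q e} \<union> {e \<in> ?E2. Q e}) \<union> {e \<in> ?E3. Q e}" for Q
    unfolding friendship_edges_eq by blast
  then have "card {e \<in> friendship_edges n. ?P e} = card {e \<in> ?E1. ?P e} + card {e \<in> ?E2. ?P e} + card {e \<in> ?E3. ?P e}"
    using disj by (simp add: card_Un_disjoint)
  then show ?thesis
    unfolding ecount_def card_filter_image[OF inj(1)] card_filter_image[OF inj(2)]
      card_filter_image[OF inj(3)] by (simp add: label)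
qed

section \<open>Labellings by integer triples\<close>

text \<open>A list of triples \<open>(x, y, s)\<close> describes a labelling of \<open>F\<^sub>n\<close> with centre label 0:
  the outer vertices \<open>2a + 1\<close> and \<open>2a + 2\<close> of triangle \<open>a\<close> get \<open>x\<close> and \<open>y\<close> modulo \<open>m\<close>,
  and \<open>s\<close> is the chosen integer representative of the rim label \<open>x + y\<close>.\<close>

definition outer_labels :: "(int \<times> int \<times> int) list \<Rightarrow> int list" where
  "outer_labels ts = map fst ts @ map (fst \<circ> snd) ts"

definition rim_labels :: "(int \<times> int \<times> int) list \<Rightarrow> int list" where
  "rim_labels ts = map (snd \<circ> snd) ts"

definition triangle_labelling :: "nat \<Rightarrow> (int \<times> int \<times> int) list \<Rightarrow> nat \<Rightarrow> nat" where
  "triangle_labelling m ts v =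
     (if v = 0 then 0
      else let (x, y, _) = ts ! ((v - 1) div 2) in nat ((if odd v then x else y) mod int m))"

lemma count_list_outer_labels_append:
  "count_list (outer_labels (ts @ us)) z = count_list (outer_labels ts) z + count_list (outer_labels us) z"
  by (simp add: outer_labels_def)

lemma count_list_rim_labels_append:
  "count_list (rim_labels (ts @ us)) z = count_list (rim_labels ts) z + count_list (rim_labels us) z"
  by (simp add: rim_labels_def)

lemma outer_labels_single: "outer_labels [(x, y, s)] = [x, y]"
  by (simp add: outer_labels_def)

lemma rim_labels_single: "rim_labels [(x, y, s)] = [s]"
  by (simp add: rim_labels_def)

lemma window_representative:
  fixes m w b :: int
  assumes "0 < m"
  obtains z where "w \<le> z" "z < w + m" "\<And>x. w \<le> x \<Longrightarrow> x < w + m \<Longrightarrow> x mod m = b mod m \<longleftrightarrow> x = z"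
proof
  let ?z = "w + (b - w) mod m"
  show "w \<le> ?z" "?z < w + m"
    using assms by simp_all
  fix x
  assume "w \<le> x" "x < w + m"
  then have "(x - w) mod m = x - w"
    by simp
  moreover have "x mod m = b mod m \<longleftrightarrow> (x - w) mod m = (b - w) mod m"
    by (simp add: mod_eq_dvd_iff)
  ultimately show "x mod m = b mod m \<longleftrightarrow> x = ?z"
    by auto
qed

lemma mod_eq_iff_in_window:
  fixes m w x y :: int
  assumes "0 < m" "w \<le> x" "x < w + m" "w \<le> y" "y < w + m"
  shows "x mod m = y mod m \<longleftrightarrow> x = y"
proof -
  obtain z where "\<And>u. w \<le> u \<Longrightarrow> u < w + m \<Longrightarrow> u mod m = y mod m \<longleftrightarrow> u = z"
    using window_representative[OF assms(1)] by metis
  then show ?thesis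
    using assms by metis
qed

lemma length_filter_mod_eq_count_list:
  fixes xs :: "int list"
  assumes "set xs \<subseteq> {w..<w + m}" "\<And>x. w \<le> x \<Longrightarrow> x < w + m \<Longrightarrow> x mod m = c \<longleftrightarrow> x = z"
  shows "length (filter (\<lambda>x. x mod m = c) xs) = count_list xs z"
proof -
  have "x mod m = c \<longleftrightarrow> z = x" if "x \<in> set xs" for x
  proof -
    have "w \<le> x" "x < w + m"
      using assms(1) that by auto
    then show ?thesis
      using assms(2) by (simp only: eq_commute[of z])
  qed
  then show ?thesis
    unfolding count_list_eq_length_filter by (simp cong: filter_cong)
qed

lemma nat_mod_add_eq_iff:
  assumes "0 < m"
  shows "(nat (x mod int m) + nat (y mod int m)) mod m = b \<longleftrightarrow> (x + y) mod int m = int b"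
proof -
  have "int ((nat (x mod int m) + nat (y mod int m)) mod m) = (x mod int m + y mod int m) mod int m"
    using assms by (simp add: zmod_int)
  also have "\<dots> = (x + y) mod int m"
    by (simp add: mod_add_eq)
  finally show ?thesis
    by linarith
qed

lemma cordial_friendship_of_window:
  fixes ts :: "(int \<times> int \<times> int) list" and cv ce :: nat
  assumes "0 < m"
    and window: "\<And>z. count_list (outer_labels ts @ rim_labels ts) z \<noteq> 0 \<Longrightarrow> w \<le> z \<and> z < w + int m"
    and rim: "\<forall>(x, y, s) \<in> set ts. s mod int m = (x + y) mod int m"
    and vertices: "\<And>z. w \<le> z \<Longrightarrow> z < w + int m \<Longrightarrow>
      cv \<le> of_bool (z mod int m = 0) + count_list (outer_labels ts) z \<and>
      of_bool (z mod int m = 0) + count_list (outer_labels ts) z \<le> cv + 1"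
    and edges: "\<And>z. w \<le> z \<Longrightarrow> z < w + int m \<Longrightarrow>
      ce \<le> count_list (outer_labels ts @ rim_labels ts) z \<and>
      count_list (outer_labels ts @ rim_labels ts) z \<le> ce + 1"
  shows "Zm_cordial m (friendship_vertices (length ts)) (friendship_edges (length ts))"
proof -
  define l where "l = triangle_labelling m ts"
  define n where "n = length ts"
  have l_centre: "l 0 = 0"
    by (simp add: l_def triangle_labelling_def)
  have l_outer: "l (2*a + 1) = nat (fst (ts ! a) mod int m)" "l (2*a + 2) = nat (fst (snd (ts ! a)) mod int m)" for a
    by (simp_all add: l_def triangle_labelling_def split: prod.split)
  have l_less: "l v < m" for v
    using \<open>0 < m\<close> by (simp add: l_def triangle_labelling_def nat_less_iff split: prod.split)
  have window_set: "set (outer_labels ts @ rim_labels ts) \<subseteq> {w..<w + int m}"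
  proof
    fix x
    assume "x \<in> set (outer_labels ts @ rim_labels ts)"
    then have "count_list (outer_labels ts @ rim_labels ts) x \<noteq> 0"
      by (simp only: count_list_0_iff not_not)
    then show "x \<in> {w..<w + int m}"
      using window by simp
  qed
  have card_eq_length_filter:
    "card {a. a < n \<and> f (ts ! a) mod int m = c} = length (filter (\<lambda>x. x mod int m = c) (map f ts))" for f c
    unfolding length_filter_conv_card n_def by (rule arg_cong[where f = card]) auto
  have nat_mod_eq_iff: "nat (x mod int m) = b \<longleftrightarrow> x mod int m = int b" for x b
    using \<open>0 < m\<close> by auto
  have counts: "vcount (friendship_vertices n) l b = of_bool (z mod int m = 0) + count_list (outer_labels ts) z \<and>
      ecount m (friendship_edges n) l b = count_list (outer_labels ts @ rim_labels ts) z"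
    if "b < m" "w \<le> z" "z < w + int m" and rep: "\<And>x. w \<le> x \<Longrightarrow> x < w + int m \<Longrightarrow> x mod int m = int b \<longleftrightarrow> x = z"
    for b z
  proof -
    have count: "card {a. a < n \<and> f (ts ! a) mod int m = int b} = count_list (map f ts) z"
      if "set (map f ts) \<subseteq> set (outer_labels ts @ rim_labels ts)" for f
      unfolding card_eq_length_filter using that window_set
      by (intro length_filter_mod_eq_count_list[OF _ rep]) blast
    have spoke_count: "card {a. a < n \<and> l (2*a + 1) = b} = count_list (map fst ts) z"
        "card {a. a < n \<and> l (2*a + 2) = b} = count_list (map (fst \<circ> snd) ts) z"
      unfolding l_outer nat_mod_eq_iff
      using count[of fst] count[of "fst \<circ> snd"] by (auto simp: outer_labels_def)
    have "{a. a < n \<and> (l (2*a + 1) + l (2*a + 2)) mod m = b} = {a. a < n \<and> snd (snd (ts ! a)) mod int m = int b}"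
    proof -
      have "(fst (ts ! a) + fst (snd (ts ! a))) mod int m = snd (snd (ts ! a)) mod int m" if "a < n" for a
        using rim nth_mem[of a ts] that unfolding n_def by (cases "ts ! a") auto
      then show ?thesis
        unfolding l_outer nat_mod_add_eq_iff[OF \<open>0 < m\<close>] by auto
    qed
    then have rim_count: "card {a. a < n \<and> (l (2*a + 1) + l (2*a + 2)) mod m = b} = count_list (rim_labels ts) z"
      using count[of "snd \<circ> snd"] by (auto simp: rim_labels_def)
    have "z mod int m = 0 \<longleftrightarrow> b = 0"
      using rep[OF \<open>w \<le> z\<close> \<open>z < w + int m\<close>] by auto
    moreover have "(l 0 + l v) mod m = l v" for v
      using l_centre l_less by simp
    ultimately show ?thesis
      unfolding vcount_friendship ecount_friendship using spoke_count rim_count l_centre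
      by (simp add: outer_labels_def)
  qed
  have bounds: "cv \<le> vcount (friendship_vertices n) l b \<and> vcount (friendship_vertices n) l b \<le> cv + 1 \<and>
      ce \<le> ecount m (friendship_edges n) l b \<and> ecount m (friendship_edges n) l b \<le> ce + 1"
    if "b < m" for b
  proof -
    obtain z where "w \<le> z" "z < w + int m"
      and "\<And>x. w \<le> x \<Longrightarrow> x < w + int m \<Longrightarrow> x mod int m = int b mod int m \<longleftrightarrow> x = z"
      using window_representative[of "int m"] \<open>0 < m\<close> by auto
    moreover have "int b mod int m = int b"
      using that by simp
    ultimately show ?thesis
      using counts[OF that] vertices edges by auto
  qed
  have "Zm_cordial_labeling m (friendship_vertices n) (friendship_edges n) l"
    unfolding Zm_cordial_labeling_def
  proof (intro conjI ballI allI impI)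
    fix a1 a2
    assume "a1 < m" "a2 < m"
    then show "\<bar>int (vcount (friendship_vertices n) l a1) - int (vcount (friendship_vertices n) l a2)\<bar> \<le> 1"
      and "\<bar>int (ecount m (friendship_edges n) l a1) - int (ecount m (friendship_edges n) l a2)\<bar> \<le> 1"
      using bounds[of a1] bounds[of a2] by linarith+
  qed (rule l_less)
  then show ?thesis
    unfolding Zm_cordial_def n_def by blast
qed

section \<open>Zigzag blocks\<close>

lemma count_list_distinct: "distinct xs \<Longrightarrow> count_list xs z = of_bool (z \<in> set xs)"
  by (induction xs) auto

lemma count_list_map_upt:
  assumes "inj_on f {0..<n}"
  shows "count_list (map f [0..<n]) z = of_bool (z \<in> f ` {0..<n})"
  using assms by (simp add: count_list_distinct distinct_map)

lemma count_list_ascending: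
  "count_list (map (\<lambda>a. c + int a) [0..<n]) z = of_bool (c \<le> z \<and> z < c + int n)"
proof -
  have "z \<in> (\<lambda>a. c + int a) ` {0..<n} \<longleftrightarrow> c \<le> z \<and> z < c + int n"
    by (auto simp: image_iff intro!: bexI[of _ "nat (z - c)"])
  then show ?thesis
    by (simp add: count_list_map_upt inj_on_def)
qed

lemma count_list_descending:
  "count_list (map (\<lambda>a. c - int a) [0..<n]) z = of_bool (c - int n < z \<and> z \<le> c)"
proof -
  have "z \<in> (\<lambda>a. c - int a) ` {0..<n} \<longleftrightarrow> c - int n < z \<and> z \<le> c"
    by (auto simp: image_iff intro!: bexI[of _ "nat (c - z)"])
  then show ?thesis
    by (simp add: count_list_map_upt inj_on_def)
qed

lemma count_list_ascending_by_two:
  "count_list (map (\<lambda>a. c + 2 * int a) [0..<n]) z = of_bool (c \<le> z \<and> z < c + 2 * int n \<and> even (z - c))"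
proof -
  have "z \<in> (\<lambda>a. c + 2 * int a) ` {0..<n} \<longleftrightarrow> c \<le> z \<and> z < c + 2 * int n \<and> even (z - c)"
  proof
    assume "c \<le> z \<and> z < c + 2 * int n \<and> even (z - c)"
    then show "z \<in> (\<lambda>a. c + 2 * int a) ` {0..<n}"
      by (intro image_eqI[of _ _ "nat ((z - c) div 2)"]) auto
  qed auto
  then show ?thesis
    by (simp add: count_list_map_upt inj_on_def)
qed

lemma count_list_descending_by_two:
  "count_list (map (\<lambda>a. c - 2 * int a) [0..<n]) z = of_bool (c - 2 * int n < z \<and> z \<le> c \<and> even (c - z))"
proof -
  have "z \<in> (\<lambda>a. c - 2 * int a) ` {0..<n} \<longleftrightarrow> c - 2 * int n < z \<and> z \<le> c \<and> even (c - z)"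
  proof
    assume "c - 2 * int n < z \<and> z \<le> c \<and> even (c - z)"
    then show "z \<in> (\<lambda>a. c - 2 * int a) ` {0..<n}"
      by (intro image_eqI[of _ _ "nat ((c - z) div 2)"]) auto
  qed auto
  then show ?thesis
    by (simp add: count_list_map_upt inj_on_def)
qed

definition zigzag :: "nat \<Rightarrow> nat \<Rightarrow> nat" where
  "zigzag n a =
     (if odd n then if a \<le> n div 2 then 2*a else 2*(a - n div 2) - 1
      else if a < n div 2 then 2*a + 1 else 2*(a - n div 2))"

lemma zigzag_less: "a < n \<Longrightarrow> zigzag n a < n"
  unfolding zigzag_def by (cases "odd n") (auto elim!: oddE evenE)

lemma inj_on_zigzag: "inj_on (zigzag n) {0..<n}"
proof (cases "odd n")
  case True
  then obtain s where "n = 2*s + 1"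
    by (metis oddE)
  then show ?thesis
    unfolding zigzag_def inj_on_def by (auto split: if_splits) presburger+
next
  case False
  then obtain s where "n = 2*s"
    by (metis evenE)
  then show ?thesis
    unfolding zigzag_def inj_on_def by (auto split: if_splits) presburger+
qed

lemma zigzag_image: "zigzag n ` {0..<n} = {0..<n}"
  using zigzag_less inj_on_zigzag by (intro endo_inj_surj) auto

lemma inj_on_zigzag_difference: "inj_on (\<lambda>a. int a - int (zigzag n a)) {0..<n}"
  unfolding zigzag_def inj_on_def by (cases "odd n") (auto elim!: oddE evenE split: if_splits)

lemma zigzag_difference_image:
  "(\<lambda>a. int a - int (zigzag n a)) ` {0..<n} = {z. \<bar>z\<bar> \<le> int (n div 2) \<and> (odd n \<or> z \<noteq> 0)}"
proof (intro equalityI subsetI)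
  fix z
  assume "z \<in> (\<lambda>a. int a - int (zigzag n a)) ` {0..<n}"
  then show "z \<in> {z. \<bar>z\<bar> \<le> int (n div 2) \<and> (odd n \<or> z \<noteq> 0)}"
    unfolding zigzag_def by (cases "odd n") (auto elim!: oddE evenE split: if_splits)
next
  fix z
  assume z: "z \<in> {z. \<bar>z\<bar> \<le> int (n div 2) \<and> (odd n \<or> z \<noteq> 0)}"
  show "z \<in> (\<lambda>a. int a - int (zigzag n a)) ` {0..<n}"
  proof (cases "odd n")
    case True
    then obtain s where n: "n = 2*s + 1"
      by (metis oddE)
    show ?thesis
    proof (cases "z \<le> 0")
      case True
      then show ?thesis
        using n z by (intro image_eqI[of _ _ "nat (- z)"]) (auto simp: zigzag_def)
    next
      case False
      then show ?thesis
        using n z by (intro image_eqI[of _ _ "nat (int n - z)"]) (auto simp: zigzag_def)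
    qed
  next
    case False
    then obtain s where n: "n = 2*s"
      by (metis evenE)
    show ?thesis
    proof (cases "z < 0")
      case True
      then show ?thesis
        using n z by (intro image_eqI[of _ _ "nat (- z - 1)"]) (auto simp: zigzag_def)
    next
      case False
      then show ?thesis
        using n z by (intro image_eqI[of _ _ "nat (int n - z)"]) (auto simp: zigzag_def)
    qed
  qed
qed

lemma count_list_map_zigzag:
  assumes "inj_on f {0..<n}"
  shows "count_list (map (\<lambda>a. f (zigzag n a)) [0..<n]) z = count_list (map f [0..<n]) z"
proof -
  have "inj_on (f \<circ> zigzag n) {0..<n}"
    using assms inj_on_zigzag zigzag_image by (intro comp_inj_on) auto
  moreover have "(f \<circ> zigzag n) ` {0..<n} = f ` {0..<n}"
    by (simp only: image_comp[symmetric] zigzag_image)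
  ultimately have "count_list (map (f \<circ> zigzag n) [0..<n]) z = of_bool (z \<in> f ` {0..<n})"
    by (metis count_list_map_upt)
  then show ?thesis
    by (simp add: count_list_map_upt[OF assms] o_def)
qed

definition zigzag_triangles :: "int \<Rightarrow> nat \<Rightarrow> (int \<times> int \<times> int) list" where
  "zigzag_triangles p n = map (\<lambda>a. (p + int a, - p - int (zigzag n a), int a - int (zigzag n a))) [0..<n]"

lemma length_zigzag_triangles [simp]: "length (zigzag_triangles p n) = n"
  by (simp add: zigzag_triangles_def)

lemma zigzag_triangles_rim: "(x, y, s) \<in> set (zigzag_triangles p n) \<Longrightarrow> s = x + y"
  by (auto simp: zigzag_triangles_def)

lemma count_list_outer_labels_zigzag_triangles:
  "count_list (outer_labels (zigzag_triangles p n)) z =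
     of_bool (p \<le> z \<and> z < p + int n) + of_bool (- p - int n < z \<and> z \<le> - p)"
proof -
  have "count_list (map (\<lambda>a. - p - int (zigzag n a)) [0..<n]) z = count_list (map (\<lambda>a. - p - int a) [0..<n]) z"
    by (rule count_list_map_zigzag) (auto simp: inj_on_def)
  then show ?thesis
    by (simp add: outer_labels_def zigzag_triangles_def o_def count_list_ascending count_list_descending)
qed

lemma count_list_rim_labels_zigzag_triangles:
  "count_list (rim_labels (zigzag_triangles p n)) z = of_bool (\<bar>z\<bar> \<le> int (n div 2) \<and> (odd n \<or> z \<noteq> 0))"
  using inj_on_zigzag_difference
  by (simp add: rim_labels_def zigzag_triangles_def o_def count_list_map_upt zigzag_difference_image)

definition dense_triangles :: "int \<Rightarrow> nat \<Rightarrow> (int \<times> int \<times> int) list" where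
  "dense_triangles p n =
     (if odd n then zigzag_triangles p n
      else zigzag_triangles p (n - 1) @ [(p + int n - 1, - p - int n + 1, 0)])"

lemma length_dense_triangles: "0 < n \<Longrightarrow> length (dense_triangles p n) = n"
  by (simp add: dense_triangles_def)

lemma dense_triangles_rim: "(x, y, s) \<in> set (dense_triangles p n) \<Longrightarrow> s = x + y"
  by (auto simp: dense_triangles_def split: if_splits dest: zigzag_triangles_rim)

lemma count_list_outer_labels_dense_triangles:
  assumes "0 < n"
  shows "count_list (outer_labels (dense_triangles p n)) z =
     of_bool (p \<le> z \<and> z < p + int n) + of_bool (- p - int n < z \<and> z \<le> - p)"
proof (cases "odd n")
  case True
  then show ?thesis
    by (simp add: dense_triangles_def count_list_outer_labels_zigzag_triangles)
next
  case False
  then have "dense_triangles p n = zigzag_triangles p (n - 1) @ [(p + int n - 1, - p - int n + 1, 0)]"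
    by (simp add: dense_triangles_def)
  moreover have "int (n - 1) = int n - 1"
    using assms by simp
  ultimately show ?thesis
    by (simp add: count_list_outer_labels_append outer_labels_single count_list_outer_labels_zigzag_triangles
        of_bool_def split: if_splits; linarith)
qed

lemma count_list_rim_labels_dense_triangles:
  assumes "0 < n"
  shows "count_list (rim_labels (dense_triangles p n)) z =
     of_bool (\<bar>z\<bar> \<le> int ((n - 1) div 2)) + of_bool (even n \<and> z = 0)"
proof (cases "odd n")
  case True
  then show ?thesis
    by (auto simp: dense_triangles_def count_list_rim_labels_zigzag_triangles elim: oddE)
next
  case False
  then have "dense_triangles p n = zigzag_triangles p (n - 1) @ [(p + int n - 1, - p - int n + 1, 0)]"
    by (simp add: dense_triangles_def)
  then show ?thesis
    using False assms
    by (auto simp: count_list_rim_labels_append rim_labels_single count_list_rim_labels_zigzag_triangles)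
qed

lemma cordial_friendship_sparse:
  assumes "1 \<le> j" "2 * (j + j div 2) < m"
  shows "Zm_cordial m (friendship_vertices j) (friendship_edges j)"
proof -
  define p where "p = int (j div 2) + 1"
  define ts where "ts = zigzag_triangles p j"
  define w where "w = - p - int j + 1"
  have outer: "count_list (outer_labels ts) z = of_bool (p \<le> z \<and> z < p + int j) + of_bool (- p - int j < z \<and> z \<le> - p)" for z
    unfolding ts_def by (rule count_list_outer_labels_zigzag_triangles)
  have rim: "count_list (rim_labels ts) z = of_bool (\<bar>z\<bar> \<le> int (j div 2) \<and> (odd j \<or> z \<noteq> 0))" for z
    unfolding ts_def by (rule count_list_rim_labels_zigzag_triangles)
  have m: "2 * (p + int j - 1) < int m"
    using assms(2) unfolding p_def of_nat_less_iff[symmetric, where 'a = int] by simp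
  have centre: "z mod int m = 0 \<longleftrightarrow> z = 0" if "w \<le> z" "z < w + int m" for z
    using mod_eq_iff_in_window[of "int m" w z 0] that m unfolding w_def p_def by auto
  have "Zm_cordial m (friendship_vertices (length ts)) (friendship_edges (length ts))"
  proof (rule cordial_friendship_of_window[where w = w and cv = 0 and ce = 0])
    show "0 < m"
      using assms by simp
    show "\<forall>(x, y, s) \<in> set ts. s mod int m = (x + y) mod int m"
      by (auto simp: ts_def dest: zigzag_triangles_rim)
    fix z
    show "w \<le> z \<and> z < w + int m" if "count_list (outer_labels ts @ rim_labels ts) z \<noteq> 0"
      using that m unfolding count_list_append outer rim w_def p_def
      by (auto split: if_splits)
    assume "w \<le> z" "z < w + int m"
    then show "0 \<le> of_bool (z mod int m = 0) + count_list (outer_labels ts) z \<and>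
        of_bool (z mod int m = 0) + count_list (outer_labels ts) z \<le> 0 + 1"
      unfolding centre[OF \<open>w \<le> z\<close> \<open>z < w + int m\<close>] outer p_def by auto
    show "0 \<le> count_list (outer_labels ts @ rim_labels ts) z \<and>
        count_list (outer_labels ts @ rim_labels ts) z \<le> 0 + 1"
      unfolding count_list_append outer rim p_def by auto
  qed
  then show ?thesis
    by (simp add: ts_def)
qed

lemma cordial_friendship_dense_odd_modulus:
  assumes "m = 2 * k + 1" "1 \<le> j" "j \<le> k" "m \<le> 3 * j"
  shows "Zm_cordial m (friendship_vertices j) (friendship_edges j)"
proof -
  define p where "p = int k - int j + 1"
  define ts where "ts = dense_triangles p j"
  have "0 < j"
    using assms by simp
  have outer: "count_list (outer_labels ts) z = of_bool (p \<le> z \<and> z \<le> int k) + of_bool (- int k \<le> z \<and> z \<le> - p)" for z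
    unfolding ts_def count_list_outer_labels_dense_triangles[OF \<open>0 < j\<close>] p_def by auto
  have rim: "count_list (rim_labels ts) z = of_bool (\<bar>z\<bar> \<le> int ((j - 1) div 2)) + of_bool (even j \<and> z = 0)" for z
    unfolding ts_def by (rule count_list_rim_labels_dense_triangles[OF \<open>0 < j\<close>])
  have half: "int k - int j \<le> int ((j - 1) div 2)" "int ((j - 1) div 2) \<le> int k"
    using assms by linarith+
  have centre: "z mod int m = 0 \<longleftrightarrow> z = 0" if "- int k \<le> z" "z < - int k + int m" for z
    using mod_eq_iff_in_window[of "int m" "- int k" z 0] that assms(1) by auto
  have "Zm_cordial m (friendship_vertices (length ts)) (friendship_edges (length ts))"
  proof (rule cordial_friendship_of_window[where w = "- int k" and cv = 0 and ce = 1])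
    show "0 < m"
      using assms by simp
    show "\<forall>(x, y, s) \<in> set ts. s mod int m = (x + y) mod int m"
      by (auto simp: ts_def dest: dense_triangles_rim)
    fix z
    show "- int k \<le> z \<and> z < - int k + int m" if "count_list (outer_labels ts @ rim_labels ts) z \<noteq> 0"
      using that half assms(1,3) unfolding count_list_append outer rim p_def
      by (auto split: if_splits)
    assume "- int k \<le> z" "z < - int k + int m"
    then show "0 \<le> of_bool (z mod int m = 0) + count_list (outer_labels ts) z \<and>
        of_bool (z mod int m = 0) + count_list (outer_labels ts) z \<le> 0 + 1"
      unfolding centre[OF \<open>- int k \<le> z\<close> \<open>z < - int k + int m\<close>] outer p_def
      using assms by auto
    show "1 \<le> count_list (outer_labels ts @ rim_labels ts) z \<and>
        count_list (outer_labels ts @ rim_labels ts) z \<le> 1 + 1"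
      using \<open>- int k \<le> z\<close> \<open>z < - int k + int m\<close> half assms(1,3)
      unfolding count_list_append outer rim p_def by auto
  qed
  then show ?thesis
    using \<open>0 < j\<close> by (simp add: ts_def length_dense_triangles)
qed

lemma cordial_friendship_dense_even_modulus:
  assumes "m = 2 * k" "j + 1 \<le> k" "m + 2 \<le> 3 * j"
  shows "Zm_cordial m (friendship_vertices j) (friendship_edges j)"
proof -
  define p where "p = int k - int j + 1"
  define ts where "ts = dense_triangles p (j - 1) @ [(1, int k, 1 - int k)]"
  have "0 < j - 1"
    using assms by linarith
  have outer: "count_list (outer_labels ts) z =
      of_bool (p \<le> z \<and> z < int k) + of_bool (- int k < z \<and> z \<le> - p) + of_bool (z = 1) + of_bool (z = int k)" for z
    unfolding ts_def count_list_outer_labels_append count_list_outer_labels_dense_triangles[OF \<open>0 < j - 1\<close>]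
      outer_labels_single p_def using \<open>0 < j - 1\<close> by (simp add: of_nat_diff)
  have rim: "count_list (rim_labels ts) z =
      of_bool (\<bar>z\<bar> \<le> int ((j - 2) div 2)) + of_bool (odd j \<and> z = 0) + of_bool (z = 1 - int k)" for z
  proof -
    have "j - 1 - 1 = j - 2" "even (j - 1) \<longleftrightarrow> odd j"
      using \<open>0 < j - 1\<close> by presburger+
    then show ?thesis
      unfolding ts_def count_list_rim_labels_append count_list_rim_labels_dense_triangles[OF \<open>0 < j - 1\<close>]
        rim_labels_single by simp
  qed
  have half: "int k - int j \<le> int ((j - 2) div 2)" "int ((j - 2) div 2) < int k - 1"
    using assms by linarith+
  have centre: "z mod int m = 0 \<longleftrightarrow> z = 0" if "1 - int k \<le> z" "z < 1 - int k + int m" for z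
    using mod_eq_iff_in_window[of "int m" "1 - int k" z 0] that assms by auto
  have "Zm_cordial m (friendship_vertices (length ts)) (friendship_edges (length ts))"
  proof (rule cordial_friendship_of_window[where w = "1 - int k" and cv = 0 and ce = 1])
    show "0 < m"
      using assms by simp
    have "(1 - int k) mod int m = (1 + int k) mod int m"
      using assms(1) by (simp add: mod_eq_dvd_iff)
    then show "\<forall>(x, y, s) \<in> set ts. s mod int m = (x + y) mod int m"
      by (auto simp: ts_def dest: dense_triangles_rim)
    fix z
    show "1 - int k \<le> z \<and> z < 1 - int k + int m" if "count_list (outer_labels ts @ rim_labels ts) z \<noteq> 0"
      using that half assms unfolding count_list_append outer rim p_def
      by (auto split: if_splits)
    assume "1 - int k \<le> z" "z < 1 - int k + int m"
    then show "0 \<le> of_bool (z mod int m = 0) + count_list (outer_labels ts) z \<and>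
        of_bool (z mod int m = 0) + count_list (outer_labels ts) z \<le> 0 + 1"
      unfolding centre[OF \<open>1 - int k \<le> z\<close> \<open>z < 1 - int k + int m\<close>] outer p_def
      using assms by auto
    show "1 \<le> count_list (outer_labels ts @ rim_labels ts) z \<and>
        count_list (outer_labels ts @ rim_labels ts) z \<le> 1 + 1"
      using \<open>1 - int k \<le> z\<close> \<open>z < 1 - int k + int m\<close> half assms
      unfolding count_list_append outer rim p_def by auto
  qed
  then show ?thesis
    using \<open>0 < j - 1\<close> by (simp add: ts_def length_dense_triangles)
qed

lemma cordial_friendship_half:
  assumes "m = 2 * k" "even k" "2 \<le> k"
  shows "Zm_cordial m (friendship_vertices k) (friendship_edges k)"
proof -
  define ts where "ts = dense_triangles 1 (k - 1) @ [(0, int k, int k)]"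
  have "0 < k - 1" "odd (k - 1)"
    using assms by auto
  have outer: "count_list (outer_labels ts) z =
      of_bool (1 \<le> z \<and> z < int k) + of_bool (- int k < z \<and> z \<le> - 1) + of_bool (z = 0) + of_bool (z = int k)" for z
    unfolding ts_def count_list_outer_labels_append count_list_outer_labels_dense_triangles[OF \<open>0 < k - 1\<close>]
      outer_labels_single using \<open>0 < k - 1\<close> by (simp add: of_nat_diff)
  have rim: "count_list (rim_labels ts) z = of_bool (\<bar>z\<bar> \<le> int ((k - 2) div 2)) + of_bool (z = int k)" for z
  proof -
    have "k - 1 - 1 = k - 2"
      by simp
    then show ?thesis
      unfolding ts_def count_list_rim_labels_append count_list_rim_labels_dense_triangles[OF \<open>0 < k - 1\<close>]
        rim_labels_single using \<open>odd (k - 1)\<close> by simp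
  qed
  have half: "int ((k - 2) div 2) < int k - 1"
    using assms by linarith
  have centre: "z mod int m = 0 \<longleftrightarrow> z = 0" if "1 - int k \<le> z" "z < 1 - int k + int m" for z
    using mod_eq_iff_in_window[of "int m" "1 - int k" z 0] that assms by auto
  have "Zm_cordial m (friendship_vertices (length ts)) (friendship_edges (length ts))"
  proof (rule cordial_friendship_of_window[where w = "1 - int k" and cv = 1 and ce = 1])
    show "0 < m"
      using assms by simp
    show "\<forall>(x, y, s) \<in> set ts. s mod int m = (x + y) mod int m"
      by (auto simp: ts_def dest: dense_triangles_rim)
    fix z
    show "1 - int k \<le> z \<and> z < 1 - int k + int m" if "count_list (outer_labels ts @ rim_labels ts) z \<noteq> 0"
      using that half assms unfolding count_list_append outer rim
      by (auto split: if_splits)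
    assume "1 - int k \<le> z" "z < 1 - int k + int m"
    then show "1 \<le> of_bool (z mod int m = 0) + count_list (outer_labels ts) z \<and>
        of_bool (z mod int m = 0) + count_list (outer_labels ts) z \<le> 1 + 1"
      unfolding centre[OF \<open>1 - int k \<le> z\<close> \<open>z < 1 - int k + int m\<close>] outer
      using assms by auto
    show "1 \<le> count_list (outer_labels ts @ rim_labels ts) z \<and>
        count_list (outer_labels ts @ rim_labels ts) z \<le> 1 + 1"
      using \<open>1 - int k \<le> z\<close> \<open>z < 1 - int k + int m\<close> half assms
      unfolding count_list_append outer rim by auto
  qed
  then show ?thesis
    using \<open>0 < k - 1\<close> by (simp add: ts_def length_dense_triangles)
qed

lemma cordial_friendship_third:
  assumes "m = 12 * s" "2 \<le> s"
  shows "Zm_cordial m (friendship_vertices (4 * s)) (friendship_edges (4 * s))"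
proof -
  define t where "t = int s"
  define ts where "ts =
    [(1, 5*t, 5*t + 1)] @
    map (\<lambda>b. (3 + 2 * int b, 6*t - 1 - int b, 6*t + 2 + int b)) [0..<s - 2] @
    [(2*t - 1, 6*t, 8*t - 1), (2*t + 1, 5*t - 1, 7*t)] @
    map (\<lambda>b. (2*t + 3 + 2 * int b, 5*t - 2 - int b, 7*t + 1 + int b)) [0..<s - 2] @
    [(4*t - 1, 6*t + 1, 10*t)] @
    map (\<lambda>b. (2 + 2 * int b, 10*t - 1 - int b, 10*t + 1 + int b)) [0..<2 * s]"
  have t: "int (s - 2) = t - 2" "int (2 * s) = 2 * t" "int m = 12 * t" "2 \<le> t"
    using assms by (simp_all add: t_def)
  have X: "count_list (map fst ts) z = of_bool (1 \<le> z \<and> z \<le> 4*t)" for z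
  proof (cases "even z")
    case True
    then obtain q where "z = 2 * q"
      by (rule evenE)
    then show ?thesis
      unfolding ts_def using t by (simp add: o_def count_list_ascending_by_two) presburger
  next
    case False
    then obtain q where "z = 2 * q + 1"
      by (rule oddE)
    then show ?thesis
      unfolding ts_def using t by (simp add: o_def count_list_ascending_by_two) presburger
  qed
  have Y: "count_list (map (fst \<circ> snd) ts) z \<le> of_bool (4*t + 1 \<le> z \<and> z \<le> 10*t)" for z
    unfolding ts_def using t by (simp add: o_def count_list_descending; smt (verit))
  have YS: "count_list (map (fst \<circ> snd) ts) z + count_list (map (snd \<circ> snd) ts) z =
      of_bool (4*t + 1 \<le> z \<and> z \<le> 12*t)" for z
    unfolding ts_def using t by (simp add: o_def count_list_descending count_list_ascending; smt (verit))
  have centre: "z mod int m = 0 \<longleftrightarrow> z = int m" if "1 \<le> z" "z < 1 + int m" for z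
    using mod_eq_iff_in_window[of "int m" 1 z "int m"] that assms by auto
  have "length ts = 4 * s"
    using assms by (simp add: ts_def)
  moreover have "Zm_cordial m (friendship_vertices (length ts)) (friendship_edges (length ts))"
  proof (rule cordial_friendship_of_window[where w = 1 and cv = 0 and ce = 1])
    show "0 < m"
      using assms by simp
    show "\<forall>(x, y, s) \<in> set ts. s mod int m = (x + y) mod int m"
      by (auto simp: ts_def algebra_simps)
    fix z
    show "1 \<le> z \<and> z < 1 + int m" if "count_list (outer_labels ts @ rim_labels ts) z \<noteq> 0"
      using that X[of z] Y[of z] YS[of z] t unfolding outer_labels_def rim_labels_def
      by (auto split: if_splits)
    assume "1 \<le> z" "z < 1 + int m"
    then show "0 \<le> of_bool (z mod int m = 0) + count_list (outer_labels ts) z \<and>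
        of_bool (z mod int m = 0) + count_list (outer_labels ts) z \<le> 0 + 1"
      unfolding centre[OF \<open>1 \<le> z\<close> \<open>z < 1 + int m\<close>] outer_labels_def
      using X[of z] Y[of z] t by (auto simp: of_bool_def split: if_splits)
    show "1 \<le> count_list (outer_labels ts @ rim_labels ts) z \<and>
        count_list (outer_labels ts @ rim_labels ts) z \<le> 1 + 1"
      unfolding outer_labels_def rim_labels_def
      using \<open>1 \<le> z\<close> \<open>z < 1 + int m\<close> X[of z] YS[of z] t by auto
  qed
  ultimately show ?thesis
    by simp
qed

lemma cordial_friendship_third_plus:
  assumes "m = 12 * s + 2" "2 \<le> s"
  shows "Zm_cordial m (friendship_vertices (4 * s + 1)) (friendship_edges (4 * s + 1))"
proof -
  define t where "t = int s"
  define ts where "ts =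
    [(4*t, 8*t + 3, 1)] @
    map (\<lambda>b. (4*t - 2 - 2 * int b, 8*t + 4 + int b, 12*t + 2 - int b)) [0..<2 * s - 1] @
    map (\<lambda>b. (4*t - 1 - 2 * int b, 4*t + 3 + int b, 8*t + 2 - int b)) [0..<s] @
    map (\<lambda>b. (2*t - 3 - 2 * int b, 5*t + 3 + int b, 7*t - int b)) [0..<s - 2] @
    [(2*t - 1, 4*t + 2, 6*t + 1), (4*t + 1, 6*t + 2, 10*t + 3), (1, 7*t + 1, 7*t + 2)]"
  have t: "int (s - 2) = t - 2" "int (2 * s - 1) = 2 * t - 1" "int m = 12 * t + 2" "2 \<le> t"
    using assms by (simp_all add: t_def of_nat_diff)
  have X: "count_list (map fst ts) z = of_bool (1 \<le> z \<and> z \<le> 4*t + 1)" for z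
  proof (cases "even z")
    case True
    then obtain q where "z = 2 * q"
      by (rule evenE)
    then show ?thesis
      unfolding ts_def using t by (simp add: o_def count_list_descending_by_two t_def) presburger
  next
    case False
    then obtain q where "z = 2 * q + 1"
      by (rule oddE)
    then show ?thesis
      unfolding ts_def using t by (simp add: o_def count_list_descending_by_two t_def) presburger
  qed
  have Y: "count_list (map (fst \<circ> snd) ts) z \<le> of_bool (4*t + 2 \<le> z \<and> z \<le> 10*t + 2)" for z
    unfolding ts_def using t by (simp add: o_def count_list_ascending t_def; smt (verit))
  have YS: "count_list (map (fst \<circ> snd) ts) z + count_list (map (snd \<circ> snd) ts) z =
      of_bool (4*t + 2 \<le> z \<and> z \<le> 12*t + 2) + of_bool (z = 1)" for z
    unfolding ts_def using t by (simp add: o_def count_list_descending count_list_ascending t_def; smt (verit))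
  have centre: "z mod int m = 0 \<longleftrightarrow> z = int m" if "1 \<le> z" "z < 1 + int m" for z
    using mod_eq_iff_in_window[of "int m" 1 z "int m"] that assms by auto
  have "length ts = 4 * s + 1"
    using assms by (simp add: ts_def)
  moreover have "Zm_cordial m (friendship_vertices (length ts)) (friendship_edges (length ts))"
  proof (rule cordial_friendship_of_window[where w = 1 and cv = 0 and ce = 1])
    show "0 < m"
      using assms by simp
    have "4*t + (8*t + 3) = 1 + int m"
      using t by simp
    then have "(1 :: int) mod int m = (4*t + (8*t + 3)) mod int m"
      by (simp only: mod_add_self2)
    then show "\<forall>(x, y, s) \<in> set ts. s mod int m = (x + y) mod int m"
      by (auto simp: ts_def algebra_simps)
    fix z
    show "1 \<le> z \<and> z < 1 + int m" if "count_list (outer_labels ts @ rim_labels ts) z \<noteq> 0"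
      using that X[of z] Y[of z] YS[of z] t unfolding outer_labels_def rim_labels_def
      by (auto split: if_splits)
    assume "1 \<le> z" "z < 1 + int m"
    then show "0 \<le> of_bool (z mod int m = 0) + count_list (outer_labels ts) z \<and>
        of_bool (z mod int m = 0) + count_list (outer_labels ts) z \<le> 0 + 1"
      unfolding centre[OF \<open>1 \<le> z\<close> \<open>z < 1 + int m\<close>] outer_labels_def
      using X[of z] Y[of z] t by (auto simp: of_bool_def split: if_splits)
    show "1 \<le> count_list (outer_labels ts @ rim_labels ts) z \<and>
        count_list (outer_labels ts @ rim_labels ts) z \<le> 1 + 1"
      unfolding outer_labels_def rim_labels_def
      using \<open>1 \<le> z\<close> \<open>z < 1 + int m\<close> X[of z] YS[of z] t by auto
  qed
  ultimately show ?thesis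
    by simp
qed

lemma cordial_friendship_12_4: "Zm_cordial 12 (friendship_vertices 4) (friendship_edges 4)"
proof -
  define ts :: "(int \<times> int \<times> int) list" where "ts = [(1, 11, 0), (2, 3, 5), (7, 9, 4), (8, 10, 6)]"
  have "length ts = 4"
    by (simp add: ts_def)
  moreover have "Zm_cordial 12 (friendship_vertices (length ts)) (friendship_edges (length ts))"
  proof (rule cordial_friendship_of_window[where w = 0 and cv = 0 and ce = 1])
    show "\<forall>(x, y, s) \<in> set ts. s mod int 12 = (x + y) mod int 12"
      by (simp add: ts_def)
    fix z :: int
    show "0 \<le> z \<and> z < 0 + int 12" if "count_list (outer_labels ts @ rim_labels ts) z \<noteq> 0"
      using that by (auto simp: ts_def outer_labels_def rim_labels_def split: if_splits)
    assume "0 \<le> z" "z < 0 + int 12"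
    moreover have "z mod int 12 = 0 \<longleftrightarrow> z = 0" if "0 \<le> z" "z < int 12"
      using that by auto
    ultimately show "0 \<le> of_bool (z mod int 12 = 0) + count_list (outer_labels ts) z \<and>
        of_bool (z mod int 12 = 0) + count_list (outer_labels ts) z \<le> 0 + 1"
      and "1 \<le> count_list (outer_labels ts @ rim_labels ts) z \<and>
        count_list (outer_labels ts @ rim_labels ts) z \<le> 1 + 1"
      by (simp_all add: ts_def outer_labels_def rim_labels_def of_bool_def; presburger)+
  qed simp
  ultimately show ?thesis
    by simp
qed

lemma cordial_friendship_14_5: "Zm_cordial 14 (friendship_vertices 5) (friendship_edges 5)"
proof -
  define ts :: "(int \<times> int \<times> int) list" where "ts = [(3, 11, 0), (4, 9, 13), (5, 10, 1), (2, 6, 8), (7, 12, 5)]"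
  have "length ts = 5"
    by (simp add: ts_def)
  moreover have "Zm_cordial 14 (friendship_vertices (length ts)) (friendship_edges (length ts))"
  proof (rule cordial_friendship_of_window[where w = 0 and cv = 0 and ce = 1])
    show "\<forall>(x, y, s) \<in> set ts. s mod int 14 = (x + y) mod int 14"
      by (simp add: ts_def)
    fix z :: int
    show "0 \<le> z \<and> z < 0 + int 14" if "count_list (outer_labels ts @ rim_labels ts) z \<noteq> 0"
      using that by (auto simp: ts_def outer_labels_def rim_labels_def split: if_splits)
    assume "0 \<le> z" "z < 0 + int 14"
    moreover have "z mod int 14 = 0 \<longleftrightarrow> z = 0" if "0 \<le> z" "z < int 14"
      using that by auto
    ultimately show "0 \<le> of_bool (z mod int 14 = 0) + count_list (outer_labels ts) z \<and>
        of_bool (z mod int 14 = 0) + count_list (outer_labels ts) z \<le> 0 + 1"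
      and "1 \<le> count_list (outer_labels ts @ rim_labels ts) z \<and>
        count_list (outer_labels ts @ rim_labels ts) z \<le> 1 + 1"
      by (simp_all add: ts_def outer_labels_def rim_labels_def of_bool_def; presburger)+
  qed simp
  ultimately show ?thesis
    by simp
qed

lemma cordial_friendship_odd_modulus:
  assumes "odd m" "1 \<le> j" "j \<le> m div 2"
  shows "Zm_cordial m (friendship_vertices j) (friendship_edges j)"
proof -
  obtain k where k: "m = 2 * k + 1"
    using assms(1) by (metis oddE)
  show ?thesis
  proof (cases "2 * (j + j div 2) < m")
    case True
    with assms(2) show ?thesis
      by (rule cordial_friendship_sparse)
  next
    case False
    then have "m \<le> 3 * j"
      by presburger
    moreover have "j \<le> k"
      using assms(3) k by simp
    ultimately show ?thesis
      using cordial_friendship_dense_odd_modulus[OF k assms(2)] by blast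
  qed
qed

lemma cordial_friendship_even_modulus:
  assumes "m mod 12 = 0 \<or> m mod 12 = 2" "1 \<le> j" "j \<le> m div 2"
    and "m mod 12 = 2 \<Longrightarrow> j < m div 2"
  shows "Zm_cordial m (friendship_vertices j) (friendship_edges j)"
proof -
  define q where "q = m div 12"
  define k where "k = m div 2"
  have "m = 12 * q + m mod 12"
    unfolding q_def by simp
  then consider "m = 12 * q" "k = 6 * q" | "m = 12 * q + 2" "k = 6 * q + 1" "j < k"
    using assms(1,4) unfolding k_def by fastforce
  note residue = this
  show ?thesis
  proof (cases "2 * (j + j div 2) < m")
    case True
    with assms(2) show ?thesis
      by (rule cordial_friendship_sparse)
  next
    case False
    then have "m \<le> 3 * j"
      by presburger
    then consider "3 * j = m" | "3 * j = m + 1" | "m + 2 \<le> 3 * j"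
      by linarith
    then show ?thesis
    proof cases
      case 1
      with residue assms(2) have "m = 12 * q" "j = 4 * q" "1 \<le> q"
        by (cases; presburger)+
      then show ?thesis
        using cordial_friendship_third[of m q] cordial_friendship_12_4
        by (cases "q = 1") auto
    next
      case 2
      with residue assms(2) have "m = 12 * q + 2" "j = 4 * q + 1" "1 \<le> q"
        by (cases; presburger)+
      then show ?thesis
        using cordial_friendship_third_plus[of m q] cordial_friendship_14_5
        by (cases "q = 1") auto
    next
      case 3
      show ?thesis
      proof (cases "j = k")
        case True
        with residue assms(2) have "m = 2 * k" "even k" "2 \<le> k"
          by (cases; simp)+
        then show ?thesis
          using cordial_friendship_half \<open>j = k\<close> by blast
      next
        case False
        have "m = 2 * k" "j + 1 \<le> k"
          using residue assms(3) False unfolding k_def by (cases; simp)+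
        then show ?thesis
          using cordial_friendship_dense_even_modulus 3 by blast
      qed
    qed
  qed
qed

lemma cordial_friendship_of_residue:
  assumes "m mod 12 \<notin> {2, 4, 6, 8, 10}" "1 \<le> j" "j \<le> m div 2"
  shows "Zm_cordial m (friendship_vertices j) (friendship_edges j)"
proof (cases "odd m")
  case True
  with assms(2,3) show ?thesis
    by (intro cordial_friendship_odd_modulus)
next
  case False
  with assms(1) have "m mod 12 = 0"
    by simp presburger
  with assms(2,3) show ?thesis
    by (intro cordial_friendship_even_modulus) auto
qed

theorem theorem10p1:
  fixes m :: nat
  assumes "m \<ge> 1"
  shows "(m mod 12 \<notin> {2, 4, 6, 8, 10} \<longrightarrow>
            (\<forall>j::nat. 1 \<le> j \<and> j \<le> m div 2 \<longrightarrow>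
               Zm_cordial m (friendship_vertices j) (friendship_edges j)))
       \<and> (m mod 12 = 2 \<longrightarrow>
            (\<forall>j::nat. 1 \<le> j \<and> j \<le> m div 2 - 1 \<longrightarrow>
               Zm_cordial m (friendship_vertices j) (friendship_edges j)))"
  using cordial_friendship_of_residue[of m] cordial_friendship_even_modulus[of m]
  by fastforce

end
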